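(* The $(\min,-)$ convolution of two vectors of length $n$ can be computed in $O(n\sqrt n)$ time in the nonuniform linear decision tree model.
   Context: For vectors $\vec x=\langle x_0,\dots,x_{n-1}\rangle$, $\vec y=\langle y_0,\dots,y_{n-1}\rangle$ of reals, the $(\min,-)$ convolution is the vector whose $k$th entry is $\min_{i=0}^{k}(x_i-y_{k-i})$, $k=0,\dots,n-1$. In the nonuniform linear decision tree model, for each input size there is a separate decision tree whose internal nodes test the sign of a linear function of the input values; the cost is the depth of the tree. *)

theory Defs
  imports Complex_Main
begin

text \<open>Inputs of size n: two vectors x = (x_0..x_{n-1}), y = (y_0..y_{n-1}),
  represented as functions nat => real (only entries below n matter).\<close>

type_synonym linform = "(nat \<Rightarrow> real) \<times> (nat \<Rightarrow> real) \<times> real"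

definition lin :: "nat \<Rightarrow> linform \<Rightarrow> (nat \<Rightarrow> real) \<Rightarrow> (nat \<Rightarrow> real) \<Rightarrow> real" where
  "lin n l x y = (case l of (a, b, c) \<Rightarrow> (\<Sum>i<n. a i * x i) + (\<Sum>i<n. b i * y i) + c)"

text \<open>Linear decision tree: internal nodes test the sign (negative / zero / positive) of a
  linear form of the input; a leaf outputs, for each output position k, a linear form of
  the input (so the output is a linear function of the input on each leaf region).\<close>

datatype ldt = Leaf "nat \<Rightarrow> linform" | Node linform ldt ldt ldt

fun eval_ldt :: "nat \<Rightarrow> ldt \<Rightarrow> (nat \<Rightarrow> real) \<Rightarrow> (nat \<Rightarrow> real) \<Rightarrow> nat \<Rightarrow> real" where
  "eval_ldt n (Leaf f) x y = (\<lambda>k. lin n (f k) x y)"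
| "eval_ldt n (Node l tneg tzero tpos) x y =
     (if lin n l x y < 0 then eval_ldt n tneg x y
      else if lin n l x y = 0 then eval_ldt n tzero x y
      else eval_ldt n tpos x y)"

fun depth :: "ldt \<Rightarrow> nat" where
  "depth (Leaf f) = 0"
| "depth (Node l t1 t2 t3) = 1 + max (depth t1) (max (depth t2) (depth t3))"

definition min_minus_conv :: "(nat \<Rightarrow> real) \<Rightarrow> (nat \<Rightarrow> real) \<Rightarrow> nat \<Rightarrow> real" where
  "min_minus_conv x y k = Min {x i - y (k - i) | i. i \<le> k}"

definition computes_min_minus_conv :: "nat \<Rightarrow> ldt \<Rightarrow> bool" where
  "computes_min_minus_conv n T \<longleftrightarrow>
     (\<forall>x y. \<forall>k<n. eval_ldt n T x y k = min_minus_conv x y k)"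

end

theory Submission
  imports Defs "HOL-Library.FuncSet"
begin

text \<open>
  Fredman's trick with blocks of \<open>d = \<lceil>sqrt n\<rceil>\<close> consecutive indices. Since
  \<open>x i - y (k - i) \<le> x i' - y (k - i')\<close> iff \<open>x i - x i' \<le> y (k - i) - y (k - i')\<close>,
  once the \<open>N = O(n sqrt n)\<close> differences \<open>x i - x i'\<close> and \<open>y j - y j'\<close> with
  \<open>\<bar>i - i'\<bar> < d\<close> are sorted, the minimiser of \<open>x i - y (k - i)\<close> within each block
  is known. The k-th output is then the minimum of \<open>k div d + 1\<close> known linear forms and costs
  \<open>k div d\<close> further comparisons, \<open>O(n sqrt n)\<close> in total.

  The differences are sorted by inserting them one at a time: two comparisons either fix the
  position of the new element or halve the number of order types still possible, so sorting
  takes \<open>2 log 2 c + 2 N\<close> comparisons, where c is the number of order types. These are sign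
  vectors of \<open>N\<^sup>2\<close> affine forms in 2n variables, so \<open>c \<le> (2 N\<^sup>2 + 1) ^ (2 n)\<close>
  and \<open>log 2 c = O(n log n)\<close>.
\<close>

lemma sgn_real_range: "sgn (z :: real) \<in> {-1, 0, 1}"
  by (simp add: sgn_if)

lemma sgn_convex_comb:
  fixes a b l :: real
  assumes "0 \<le> l" "l \<le> 1" "sgn a = sgn b"
  shows "sgn ((1 - l) * a + l * b) = sgn a"
proof -
  consider "0 < a" "0 < b" | "a = 0" "b = 0" | "a < 0" "b < 0"
    using assms(3) by (auto simp: sgn_if split: if_splits)
  then show ?thesis
  proof cases
    case 1
    have "0 < (1 - l) * a + l * b"
      using assms(1,2) 1 by (cases "l = 0") (auto intro: add_nonneg_pos add_pos_nonneg)
    then show ?thesis using 1 by simp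
  next
    case 3
    have "(1 - l) * a + l * b < 0"
      using assms(1,2) 3 by (cases "l = 0") (auto intro: add_nonpos_neg add_neg_nonpos
        simp: mult_nonneg_nonpos mult_pos_neg)
    then show ?thesis using 3 by simp
  qed simp
qed

lemma obtain_arg_max_on:
  fixes f :: "'a \<Rightarrow> 'b::linorder"
  assumes "finite A" "A \<noteq> {}"
  obtains a where "a \<in> A" "\<forall>b\<in>A. f b \<le> f a"
proof -
  have "Max (f ` A) \<in> f ` A"
    using assms by (intro Max_in) auto
  then obtain a where a: "a \<in> A" "Max (f ` A) = f a"
    by blast
  have "\<forall>b\<in>A. f b \<le> Max (f ` A)"
    using assms by simp
  with a show thesis by (intro that) auto
qed

lemma obtain_arg_min_on:
  fixes f :: "'a \<Rightarrow> 'b::linorder"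
  assumes "finite A" "A \<noteq> {}"
  obtains a where "a \<in> A" "\<forall>b\<in>A. f a \<le> f b"
proof -
  have "Min (f ` A) \<in> f ` A"
    using assms by (intro Min_in) auto
  then obtain a where a: "a \<in> A" "Min (f ` A) = f a"
    by blast
  have "\<forall>b\<in>A. Min (f ` A) \<le> f b"
    using assms by simp
  with a show thesis by (intro that) auto
qed

lemma Min_insert_dominated:
  fixes f :: "'a \<Rightarrow> 'b::linorder"
  assumes "finite A" "f a \<le> f b"
  shows "Min (f ` insert a (insert b A)) = Min (f ` insert a A)"
  using assms by (cases "A = {}") (auto simp: min_def)

lemma Min_eq_Min_dominating:
  fixes A B :: "'a::linorder set"
  assumes "finite A" "B \<subseteq> A" "B \<noteq> {}" "\<forall>a\<in>A. \<exists>b\<in>B. b \<le> a"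
  shows "Min A = Min B"
proof (rule antisym)
  show "Min A \<le> Min B"
    using Min_antimono[OF assms(2,3,1)] .
  have "finite B" "A \<noteq> {}"
    using assms(1-3) finite_subset by auto
  then obtain b where "b \<in> B" "b \<le> Min A"
    using assms(1,4) Min_in by blast
  then show "Min B \<le> Min A"
    using \<open>finite B\<close> Min_le order_trans by blast
qed

lemma same_block_less:
  fixes a b d :: nat
  assumes "0 < d" "a div d = b div d"
  shows "a < b + d"
proof -
  have "a < (a div d + 1) * d"
    using assms(1) div_less_iff_less_mult[of d a "a div d + 1"] by simp
  also have "\<dots> = b div d * d + d"
    using assms(2) by simp
  also have "\<dots> \<le> b + d"
    using div_times_less_eq_dividend[of b d] by simp
  finally show ?thesis .
qed

lemma power_Suc_add_double_le: "(x::nat) ^ Suc e + 2 * x ^ e \<le> (x + 2) ^ Suc e"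
proof -
  have "x ^ Suc e + 2 * x ^ e = (x + 2) * x ^ e" by (simp add: algebra_simps)
  also have "\<dots> \<le> (x + 2) * (x + 2) ^ e" by (intro mult_left_mono power_mono) auto
  finally show ?thesis by simp
qed

lemma log2_le_self: "0 < m \<Longrightarrow> log 2 (real m) \<le> real m"
proof -
  assume "0 < m"
  have "real m < 2 ^ m"
    using less_exp[of m] by (metis of_nat_less_iff of_nat_numeral of_nat_power)
  then have "log 2 (real m) \<le> log 2 (2 ^ m)"
    using \<open>0 < m\<close> by (subst log_le_cancel_iff) auto
  also have "\<dots> = real m"
    by (simp add: log_nat_power)
  finally show ?thesis .
qed

lemma log2_le_pred_if_double_le:
  assumes "0 < a" "2 * a \<le> b"
  shows "log 2 (real a) \<le> log 2 (real b) - 1"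
proof -
  have "log 2 (2 * real a) \<le> log 2 (real b)"
    using assms by simp
  then show ?thesis
    using assms by (simp add: log_mult)
qed

section \<open>Linear decision trees that are correct on a region\<close>

type_synonym input = "(nat \<Rightarrow> real) \<times> (nat \<Rightarrow> real)"
type_synonym vector_map = "(nat \<Rightarrow> real) \<Rightarrow> (nat \<Rightarrow> real) \<Rightarrow> nat \<Rightarrow> real"

definition lf_diff :: "linform \<Rightarrow> linform \<Rightarrow> linform" where
  "lf_diff l l' = (case l of (a, b, c) \<Rightarrow> case l' of (a', b', c') \<Rightarrow>
      (\<lambda>i. a i - a' i, \<lambda>i. b i - b' i, c - c'))"

lemma lin_lf_diff [simp]: "lin n (lf_diff l l') x y = lin n l x y - lin n l' x y"
  by (cases l; cases l') (simp add: lf_diff_def lin_def sum_subtractf algebra_simps)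

definition computable_on :: "nat \<Rightarrow> vector_map \<Rightarrow> input set \<Rightarrow> real \<Rightarrow> bool" where
  "computable_on n F R b \<longleftrightarrow>
     (\<exists>T. real (depth T) \<le> b \<and> (\<forall>(x, y) \<in> R. \<forall>k<n. eval_ldt n T x y k = F x y k))"

lemma computable_on_mono:
  "computable_on n F R b \<Longrightarrow> R' \<subseteq> R \<Longrightarrow> b \<le> b' \<Longrightarrow> computable_on n F R' b'"
  unfolding computable_on_def by (metis (no_types, lifting) order_trans subsetD)

lemma computable_on_weaken: "computable_on n F R b \<Longrightarrow> b \<le> b' \<Longrightarrow> computable_on n F R b'"
  using computable_on_mono by blast

lemma computable_on_empty: "b \<ge> 0 \<Longrightarrow> computable_on n F {} b"
  unfolding computable_on_def by (rule exI[of _ "Leaf (\<lambda>_. (\<lambda>_. 0, \<lambda>_. 0, 0))"]) simp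

lemma computable_on_linear:
  assumes "b \<ge> 0" and "\<And>x y k. (x, y) \<in> R \<Longrightarrow> k < n \<Longrightarrow> F x y k = lin n (f k) x y"
  shows "computable_on n F R b"
  unfolding computable_on_def using assms by (intro exI[of _ "Leaf f"]) auto

lemma computable_on_compare:
  assumes "computable_on n F (R \<inter> {(x, y). lin n l x y < lin n l' x y}) b"
    and "computable_on n F (R \<inter> {(x, y). lin n l x y = lin n l' x y}) b"
    and "computable_on n F (R \<inter> {(x, y). lin n l x y > lin n l' x y}) b"
  shows "computable_on n F R (b + 1)"
proof -
  have tree_on_part:
    "\<exists>T. real (depth T) \<le> b \<and> (\<forall>(x, y) \<in> R. P x y \<longrightarrow> (\<forall>k<n. eval_ldt n T x y k = F x y k))"
    if "computable_on n F (R \<inter> {(x, y). P x y}) b" for P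
    using that unfolding computable_on_def by fast
  obtain T1 where "real (depth T1) \<le> b"
    "\<forall>(x, y) \<in> R. lin n l x y < lin n l' x y \<longrightarrow> (\<forall>k<n. eval_ldt n T1 x y k = F x y k)"
    using tree_on_part[OF assms(1)] by blast
  moreover obtain T2 where "real (depth T2) \<le> b"
    "\<forall>(x, y) \<in> R. lin n l x y = lin n l' x y \<longrightarrow> (\<forall>k<n. eval_ldt n T2 x y k = F x y k)"
    using tree_on_part[OF assms(2)] by blast
  moreover obtain T3 where "real (depth T3) \<le> b"
    "\<forall>(x, y) \<in> R. lin n l x y > lin n l' x y \<longrightarrow> (\<forall>k<n. eval_ldt n T3 x y k = F x y k)"
    using tree_on_part[OF assms(3)] by blast
  ultimately show ?thesis
    unfolding computable_on_def
    by (intro exI[of _ "Node (lf_diff l l') T1 T2 T3"]) (auto simp: not_less_iff_gr_or_eq)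
qed

definition min_candidates :: "nat \<Rightarrow> vector_map \<Rightarrow> input set \<Rightarrow> (nat \<Rightarrow> linform list) \<Rightarrow> bool" where
  "min_candidates n F R C \<longleftrightarrow> (\<forall>k<n. C k \<noteq> []) \<and>
     (\<forall>(x, y) \<in> R. \<forall>k<n. F x y k = Min ((\<lambda>h. lin n h x y) ` set (C k)))"

lemma min_candidates_drop:
  assumes cand: "min_candidates n F R C" and Ck: "set (C k) = insert h (insert h' (set hs))"
    and "R' \<subseteq> R" and dominated: "\<forall>(x, y) \<in> R'. lin n h x y \<le> lin n h' x y"
  shows "min_candidates n F R' (C(k := h # hs))"
proof -
  have "F x y k' = Min ((\<lambda>h. lin n h x y) ` set ((C(k := h # hs)) k'))"
    if xy: "(x, y) \<in> R'" and "k' < n" for x y k'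
  proof -
    have "F x y k' = Min ((\<lambda>h. lin n h x y) ` set (C k'))"
      using cand xy \<open>k' < n\<close> \<open>R' \<subseteq> R\<close> unfolding min_candidates_def by blast
    moreover have "Min ((\<lambda>h. lin n h x y) ` set (C k)) = Min ((\<lambda>h. lin n h x y) ` set (h # hs))"
      using Min_insert_dominated[of "set hs" "\<lambda>h. lin n h x y" h h'] dominated xy Ck by auto
    ultimately show ?thesis by (cases "k' = k") simp_all
  qed
  with cand show ?thesis unfolding min_candidates_def by auto
qed

lemma computable_on_single_candidates:
  assumes cand: "min_candidates n F R C" and single: "\<forall>k<n. length (C k) \<le> 1"
  shows "computable_on n F R 0"
proof (rule computable_on_linear[where f = "\<lambda>k. hd (C k)"])
  fix x y k assume "(x, y) \<in> R" "k < n"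
  then have "F x y k = Min ((\<lambda>h. lin n h x y) ` set (C k))"
    using cand unfolding min_candidates_def by fast
  moreover have "set (C k) = {hd (C k)}"
    using cand single \<open>k < n\<close> unfolding min_candidates_def by (cases "C k") auto
  ultimately show "F x y k = lin n (hd (C k)) x y"
    by simp
qed simp

lemma computable_on_min_candidates:
  "min_candidates n F R C \<Longrightarrow> computable_on n F R (\<Sum>k<n. length (C k) - 1)"
proof (induction "\<Sum>k<n. length (C k) - 1" arbitrary: C R rule: less_induct)
  case less
  show ?case
  proof (cases "\<exists>k<n. 2 \<le> length (C k)")
    case False
    then have "\<forall>k<n. length (C k) \<le> 1"
      by auto
    then have "computable_on n F R 0"
      by (rule computable_on_single_candidates[OF less.prems])
    then show ?thesis
      by (rule computable_on_weaken) (simp add: sum_nonneg)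
  next
    case True
    then obtain k where k: "k < n" and "2 \<le> length (C k)" by blast
    then obtain h h' hs where Ck: "C k = h # h' # hs"
      by (cases "C k"; cases "tl (C k)") auto
    define m where "m = (\<Sum>k<n. length (C k) - 1)"
    have shorter: "(\<Sum>j<n. length ((C(k := g # hs)) j) - 1) < m" for g
      unfolding m_def using k Ck by (intro sum_strict_mono_ex1) auto
    have recurse: "computable_on n F R' (real m - 1)"
      if "R' \<subseteq> R" "set (C k) = insert g (insert g' (set hs))"
        "\<forall>(x, y) \<in> R'. lin n g x y \<le> lin n g' x y" for R' g g'
    proof (rule computable_on_mono)
      show "computable_on n F R' (\<Sum>j<n. length ((C(k := g # hs)) j) - 1)"
        using less.hyps[OF shorter[unfolded m_def]] min_candidates_drop[OF less.prems that(2,1,3)] .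
      show "real (\<Sum>j<n. length ((C(k := g # hs)) j) - 1) \<le> real m - 1"
        using shorter[of g] by linarith
    qed simp
    have "computable_on n F R (real m - 1 + 1)"
    proof (rule computable_on_compare[where l = h and l' = h'])
      show "computable_on n F (R \<inter> {(x, y). lin n h x y < lin n h' x y}) (real m - 1)"
        by (rule recurse) (auto simp: Ck)
      show "computable_on n F (R \<inter> {(x, y). lin n h x y = lin n h' x y}) (real m - 1)"
        by (rule recurse) (auto simp: Ck)
      show "computable_on n F (R \<inter> {(x, y). lin n h x y > lin n h' x y}) (real m - 1)"
        by (rule recurse[where g = h' and g' = h]) (auto simp: Ck)
    qed
    then show ?thesis unfolding m_def by simp
  qed
qed

section \<open>Sorting linear forms: Fredman's trick\<close>

definition form_val :: "(nat \<Rightarrow> linform) \<Rightarrow> nat \<Rightarrow> nat \<Rightarrow> input \<Rightarrow> real" where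
  "form_val g n u p = lin n (g u) (fst p) (snd p)"

definition order_type :: "(nat \<Rightarrow> linform) \<Rightarrow> nat \<Rightarrow> nat \<Rightarrow> input \<Rightarrow> nat \<times> nat \<Rightarrow> real" where
  "order_type g n N p =
     restrict (\<lambda>(u, v). sgn (form_val g n u p - form_val g n v p)) ({..<N} \<times> {..<N})"

definition order_fixed :: "(nat \<Rightarrow> linform) \<Rightarrow> nat \<Rightarrow> input set \<Rightarrow> nat \<Rightarrow> bool" where
  "order_fixed g n R t \<longleftrightarrow> (\<forall>p\<in>R. \<forall>q\<in>R. \<forall>u<t. \<forall>v<t.
     sgn (form_val g n u p - form_val g n v p) = sgn (form_val g n u q - form_val g n v q))"

lemma finite_order_types: "finite (order_type g n N ` R)"
proof (rule finite_subset)
  show "order_type g n N ` R \<subseteq> ({..<N} \<times> {..<N}) \<rightarrow>\<^sub>E {-1, 0, 1}"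
  proof (rule image_subsetI)
    show "order_type g n N p \<in> ({..<N} \<times> {..<N}) \<rightarrow>\<^sub>E {-1, 0, 1}" for p
      unfolding order_type_def restrict_PiE_iff using sgn_real_range by auto
  qed
qed (simp add: finite_PiE)

lemma card_order_types_mono:
  "R' \<subseteq> R \<Longrightarrow> card (order_type g n N ` R') \<le> card (order_type g n N ` R)"
  by (intro card_mono finite_order_types image_mono)

lemma card_order_types_pos: "R \<noteq> {} \<Longrightarrow> 0 < card (order_type g n N ` R)"
  using finite_order_types by (auto simp: card_gt_0_iff)

lemma card_order_types_split:
  assumes "t < N" "s < N"
  shows "card (order_type g n N ` (R \<inter> {p. form_val g n t p < form_val g n s p}))
       + card (order_type g n N ` (R \<inter> {p. form_val g n s p < form_val g n t p}))
       \<le> card (order_type g n N ` R)"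
proof -
  let ?lt = "order_type g n N ` (R \<inter> {p. form_val g n t p < form_val g n s p})"
  let ?gt = "order_type g n N ` (R \<inter> {p. form_val g n s p < form_val g n t p})"
  have "?lt \<inter> ?gt = {}"
  proof (rule ccontr)
    assume "?lt \<inter> ?gt \<noteq> {}"
    then obtain p q where "form_val g n t p < form_val g n s p" "form_val g n s q < form_val g n t q"
      and "order_type g n N p = order_type g n N q"
      by auto
    then have "order_type g n N p (t, s) = order_type g n N q (t, s)"
      and "form_val g n t p < form_val g n s p" "form_val g n s q < form_val g n t q"
      by simp_all
    then show False using assms by (simp add: order_type_def sgn_if split: if_splits)
  qed
  then have "card ?lt + card ?gt = card (?lt \<union> ?gt)"
    by (intro card_Un_disjoint[symmetric] finite_order_types)
  also have "\<dots> \<le> card (order_type g n N ` R)"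
    by (intro card_mono finite_order_types) auto
  finally show ?thesis .
qed

lemma computable_on_compare_forms:
  assumes "computable_on n F (R \<inter> {p. form_val g n t p < form_val g n s p}) b"
    and "computable_on n F (R \<inter> {p. form_val g n t p = form_val g n s p}) b"
    and "computable_on n F (R \<inter> {p. form_val g n s p < form_val g n t p}) b"
  shows "computable_on n F R (b + 1)"
  by (rule computable_on_compare[where l = "g t" and l' = "g s"];
      rule computable_on_mono[OF assms(1) _ order_refl] computable_on_mono[OF assms(2) _ order_refl]
        computable_on_mono[OF assms(3) _ order_refl])
     (auto simp: form_val_def)

lemma order_fixed_subset: "order_fixed g n R t \<Longrightarrow> R' \<subseteq> R \<Longrightarrow> order_fixed g n R' t"
  unfolding order_fixed_def by blast

lemma order_fixed_le:
  assumes "order_fixed g n R t" "p0 \<in> R" "p \<in> R" "u < t" "v < t"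
    and "form_val g n u p0 \<le> form_val g n v p0"
  shows "form_val g n u p \<le> form_val g n v p"
proof -
  have "sgn (form_val g n u p - form_val g n v p) = sgn (form_val g n u p0 - form_val g n v p0)"
    using assms unfolding order_fixed_def by blast
  then show ?thesis using assms(6) by (auto simp: sgn_if split: if_splits)
qed

lemma order_fixed_Suc:
  assumes "order_fixed g n R t" "R' \<subseteq> R"
    and "\<And>u. u < t \<Longrightarrow> \<exists>c. \<forall>p\<in>R'. sgn (form_val g n t p - form_val g n u p) = c"
  shows "order_fixed g n R' (Suc t)"
proof -
  have sgn_swap: "sgn (a - b) = - sgn (b - a)" for a b :: real
    by (simp add: sgn_if)
  have "sgn (form_val g n u p - form_val g n v p) = sgn (form_val g n u q - form_val g n v q)"
    if pq: "p \<in> R'" "q \<in> R'" and "u \<le> t" "v \<le> t" for p q u v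
  proof -
    consider "u = t" "v = t" | "u = t" "v < t" | "u < t" "v = t" | "u < t" "v < t"
      using \<open>u \<le> t\<close> \<open>v \<le> t\<close> by (cases "u = t"; cases "v = t") auto
    then show ?thesis
    proof cases
      case 2
      then obtain c where "\<forall>p\<in>R'. sgn (form_val g n t p - form_val g n v p) = c"
        using assms(3) by blast
      with 2 pq show ?thesis by simp
    next
      case 3
      then obtain c where c: "\<forall>p\<in>R'. sgn (form_val g n t p - form_val g n u p) = c"
        using assms(3) by blast
      have "sgn (form_val g n u p - form_val g n t p) = - c"
        using sgn_swap[of "form_val g n u p"] c pq by simp
      moreover have "sgn (form_val g n u q - form_val g n t q) = - c"
        using sgn_swap[of "form_val g n u q"] c pq by simp
      ultimately show ?thesis using 3 by simp
    next
      case 4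
      then show ?thesis using assms(1,2) pq unfolding order_fixed_def by blast
    qed simp
  qed
  then show ?thesis
    unfolding order_fixed_def less_Suc_eq_le by blast
qed

text \<open>
  One insertion step: forms \<open>0..<t\<close> are already ordered consistently on R, and
  \<open>recurse\<close> solves every subregion on which either form t is placed as well or at most
  half of the order types of R survive. The point \<open>p0\<close> serves to read off the known order.
\<close>

locale sorting_insertion =
  fixes n :: nat and g :: "nat \<Rightarrow> linform" and N t :: nat
    and F :: vector_map
    and R :: "input set" and B :: real and p0 :: input
  assumes t_less: "t < N" and fixed: "order_fixed g n R t" and p0: "p0 \<in> R"
    and recurse: "\<And>R'. R' \<subseteq> R \<Longrightarrow>
      order_fixed g n R' (Suc t) \<or> 2 * card (order_type g n N ` R') \<le> card (order_type g n N ` R) \<Longrightarrow>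
      computable_on n F R' B"
begin

abbreviation val :: "nat \<Rightarrow> input \<Rightarrow> real" where
  "val u p \<equiv> form_val g n u p"

definition small :: "input set \<Rightarrow> bool" where
  "small X \<longleftrightarrow> 2 * card (order_type g n N ` X) \<le> card (order_type g n N ` R)"

lemma computable_on_small: "X \<subseteq> Y \<Longrightarrow> Y \<subseteq> R \<Longrightarrow> small Y \<Longrightarrow> computable_on n F X B"
  unfolding small_def using card_order_types_mono[of X Y g n N] by (intro recurse) auto

lemma computable_on_equal:
  assumes "s < t" "X \<subseteq> R" "\<forall>p\<in>X. val t p = val s p"
  shows "computable_on n F X B"
proof (intro recurse disjI1 order_fixed_Suc[OF fixed])
  fix u assume "u < t"
  have "sgn (val t p - val u p) = sgn (val s p0 - val u p0)" if "p \<in> X" for p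
  proof -
    have "sgn (val s p - val u p) = sgn (val s p0 - val u p0)"
      using fixed p0 assms(1,2) \<open>u < t\<close> that unfolding order_fixed_def by blast
    then show ?thesis using assms(3) that by simp
  qed
  then show "\<exists>c. \<forall>p\<in>X. sgn (val t p - val u p) = c" by blast
qed (fact assms(2))+

lemma computable_on_separated:
  assumes "X \<subseteq> R" and "\<And>u. u < t \<Longrightarrow> (\<forall>p\<in>X. val u p < val t p) \<or> (\<forall>p\<in>X. val t p < val u p)"
  shows "computable_on n F X B"
proof (intro recurse disjI1 order_fixed_Suc[OF fixed])
  fix u assume "u < t"
  then consider "\<forall>p\<in>X. val u p < val t p" | "\<forall>p\<in>X. val t p < val u p"
    using assms(2) by blast
  then show "\<exists>c. \<forall>p\<in>X. sgn (val t p - val u p) = c"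
    by cases (intro exI[of _ 1] exI[of _ "-1"]; simp)+
qed (fact assms(1))+

lemma small_below_if_not_small_above:
  assumes "s < t" "\<not> small (R \<inter> {p. val s p < val t p})"
  shows "small (R \<inter> {p. val t p < val s p})"
  using card_order_types_split[of t N s g n R] assms t_less unfolding small_def by linarith

text \<open>
  Form t is compared with the lowest upper pivot s and with the highest form s' below all upper
  pivots. Being above s or below s' leaves few order types; in between, t is placed.
\<close>

definition upper_pivots :: "nat set" where
  "upper_pivots = {s. s < t \<and> small (R \<inter> {p. val s p < val t p})}"

definition lower_forms :: "nat set" where
  "lower_forms = {u. u < t \<and> (\<forall>s\<in>upper_pivots. val u p0 < val s p0)}"

lemma computable_on_below_upper_pivots:
  assumes X: "X \<subseteq> R" and below: "\<forall>p\<in>X. \<forall>u<t. u \<notin> lower_forms \<longrightarrow> val t p < val u p"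
  shows "computable_on n F X (B + 1)"
proof (cases "lower_forms = {}")
  case True
  then have "computable_on n F X B"
    using below by (intro computable_on_separated[OF X]) auto
  then show ?thesis by (rule computable_on_mono) auto
next
  case False
  have "finite lower_forms" unfolding lower_forms_def by auto
  then obtain s where s: "s \<in> lower_forms" and s_max: "\<forall>u\<in>lower_forms. val u p0 \<le> val s p0"
    using False by (rule obtain_arg_max_on)
  have "s < t" "s \<notin> upper_pivots" using s unfolding lower_forms_def by auto
  then have small_below: "small (R \<inter> {p. val t p < val s p})"
    using small_below_if_not_small_above unfolding upper_pivots_def by blast
  show ?thesis
  proof (rule computable_on_compare_forms[where t = t and s = s])
    show "computable_on n F (X \<inter> {p. val t p < val s p}) B"
      using X small_below by (intro computable_on_small[of _ "R \<inter> {p. val t p < val s p}"]) auto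
    show "computable_on n F (X \<inter> {p. val t p = val s p}) B"
      using X \<open>s < t\<close> by (intro computable_on_equal) auto
    have "val u p < val t p" if "p \<in> X" "val s p < val t p" "u \<in> lower_forms" for p u
      using order_fixed_le[OF fixed p0, of p u s] s_max that X \<open>s < t\<close>
      unfolding lower_forms_def by fastforce
    then show "computable_on n F (X \<inter> {p. val s p < val t p}) B"
      using X below by (intro computable_on_separated) blast+
  qed
qed

lemma computable_on_insertion: "computable_on n F R (B + 2)"
proof (cases "upper_pivots = {}")
  case True
  then have "computable_on n F R (B + 1)"
    by (intro computable_on_below_upper_pivots) (auto simp: lower_forms_def)
  then show ?thesis by (rule computable_on_mono) auto
next
  case False
  have "finite upper_pivots" unfolding upper_pivots_def by auto
  then obtain s where s: "s \<in> upper_pivots" and s_min: "\<forall>u\<in>upper_pivots. val s p0 \<le> val u p0"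
    using False by (rule obtain_arg_min_on)
  have "s < t" "small (R \<inter> {p. val s p < val t p})" using s unfolding upper_pivots_def by auto
  have "computable_on n F R (B + 1 + 1)"
  proof (rule computable_on_compare_forms[where t = t and s = s])
    have "val t p < val u p"
      if "p \<in> R" "val t p < val s p" "u < t" "u \<notin> lower_forms" for p u
    proof -
      obtain s' where "s' \<in> upper_pivots" "val s' p0 \<le> val u p0"
        using \<open>u < t\<close> \<open>u \<notin> lower_forms\<close> unfolding lower_forms_def by auto
      then have "val s p0 \<le> val u p0"
        using s_min by force
      then have "val s p \<le> val u p"
        using order_fixed_le[OF fixed p0 \<open>p \<in> R\<close> \<open>s < t\<close> \<open>u < t\<close>] by blast
      then show ?thesis using \<open>val t p < val s p\<close> by linarith
    qed
    then show "computable_on n F (R \<inter> {p. val t p < val s p}) (B + 1)"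
      by (intro computable_on_below_upper_pivots) auto
    have "computable_on n F (R \<inter> {p. val t p = val s p}) B"
      using \<open>s < t\<close> by (intro computable_on_equal) auto
    then show "computable_on n F (R \<inter> {p. val t p = val s p}) (B + 1)"
      by (rule computable_on_mono) auto
    have "computable_on n F (R \<inter> {p. val s p < val t p}) B"
      using \<open>small _\<close> by (intro computable_on_small) auto
    then show "computable_on n F (R \<inter> {p. val s p < val t p}) (B + 1)"
      by (rule computable_on_mono) auto
  qed
  then show ?thesis by (simp add: add.assoc)
qed

end

lemma computable_on_insertion_step:
  assumes "t < N" "0 \<le> K"
    and next_stage: "\<And>R. order_fixed g n R (Suc t) \<Longrightarrow> R \<noteq> {} \<Longrightarrow>
      computable_on n F R (K + 2 * log 2 (card (order_type g n N ` R)) + 2 * real (N - Suc t))"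
    and "order_fixed g n R t" "R \<noteq> {}"
  shows "computable_on n F R (K + 2 * log 2 (card (order_type g n N ` R)) + 2 * real (N - t))"
  using assms(4,5)
proof (induction "card (order_type g n N ` R)" arbitrary: R rule: less_induct)
  case less
  define W where "W = card (order_type g n N ` R)"
  define B where "B = K + 2 * log 2 W + 2 * real (N - t) - 2"
  have "0 < W"
    unfolding W_def using card_order_types_pos[OF \<open>R \<noteq> {}\<close>] .
  then have "0 \<le> log 2 W" by simp
  then have "0 \<le> B"
    unfolding B_def using \<open>0 \<le> K\<close> \<open>t < N\<close> by linarith
  obtain p0 where "p0 \<in> R"
    using \<open>R \<noteq> {}\<close> by blast
  have "sorting_insertion n g N t F R B p0"
  proof
    fix R' assume "R' \<subseteq> R"
      and R': "order_fixed g n R' (Suc t) \<or> 2 * card (order_type g n N ` R') \<le> card (order_type g n N ` R)"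
    let ?W' = "card (order_type g n N ` R')"
    show "computable_on n F R' B"
    proof (cases "R' = {}")
      case True
      then show ?thesis using computable_on_empty \<open>0 \<le> B\<close> by simp
    next
      case False
      have "0 < ?W'" "?W' \<le> W"
        using card_order_types_pos[OF False] card_order_types_mono[OF \<open>R' \<subseteq> R\<close>]
        unfolding W_def by auto
      show ?thesis
      proof (cases "order_fixed g n R' (Suc t)")
        case True
        have "log 2 ?W' \<le> log 2 W"
          using \<open>0 < ?W'\<close> \<open>?W' \<le> W\<close> by simp
        then have "K + 2 * log 2 ?W' + 2 * real (N - Suc t) \<le> B"
          unfolding B_def using \<open>t < N\<close> by simp
        with next_stage[OF True False] show ?thesis
          by (rule computable_on_weaken)
      next
        case False
        then have "2 * ?W' \<le> W"
          using R' unfolding W_def by blast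
        then have "log 2 ?W' \<le> log 2 W - 1"
          using log2_le_pred_if_double_le \<open>0 < ?W'\<close> by blast
        then have "K + 2 * log 2 ?W' + 2 * real (N - t) \<le> B"
          unfolding B_def by simp
        moreover have "?W' < card (order_type g n N ` R)" "order_fixed g n R' t"
          using \<open>0 < ?W'\<close> \<open>2 * ?W' \<le> W\<close> order_fixed_subset[OF less.prems(1) \<open>R' \<subseteq> R\<close>]
          unfolding W_def by auto
        then have "computable_on n F R' (K + 2 * log 2 ?W' + 2 * real (N - t))"
          using less.hyps \<open>R' \<noteq> {}\<close> by blast
        ultimately show ?thesis
          using computable_on_weaken by blast
      qed
    qed
  qed (use \<open>t < N\<close> less.prems \<open>p0 \<in> R\<close> in auto)
  then have "computable_on n F R (B + 2)"
    by (rule sorting_insertion.computable_on_insertion)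
  then show ?case
    unfolding B_def W_def by simp
qed

text \<open>
  The potential \<open>2 log 2 (number of order types) + 2 (N - t)\<close> pays for the two
  comparisons of each insertion step.
\<close>

lemma computable_on_by_sorting:
  assumes sorted: "\<And>R. order_fixed g n R N \<Longrightarrow> computable_on n F R K" and "0 \<le> K"
    and "order_fixed g n R t" "t \<le> N" "R \<noteq> {}"
  shows "computable_on n F R (K + 2 * log 2 (card (order_type g n N ` R)) + 2 * real (N - t))"
  using assms(3-)
proof (induction "N - t" arbitrary: t R)
  case 0
  then have "computable_on n F R K"
    using sorted by simp
  moreover have "0 \<le> log 2 (card (order_type g n N ` R))"
    using card_order_types_pos[OF \<open>R \<noteq> {}\<close>, of g n N] by simp
  then have "K \<le> K + 2 * log 2 (card (order_type g n N ` R)) + 2 * real (N - t)"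
    by simp
  ultimately show ?case
    by (rule computable_on_weaken)
next
  case (Suc d)
  then have "t < N" by linarith
  have "computable_on n F R' (K + 2 * log 2 (card (order_type g n N ` R')) + 2 * real (N - Suc t))"
    if "order_fixed g n R' (Suc t)" "R' \<noteq> {}" for R'
    using Suc.hyps(1)[of "Suc t" R'] Suc.hyps(2) that \<open>t < N\<close> by simp
  from computable_on_insertion_step[OF \<open>t < N\<close> \<open>0 \<le> K\<close> this Suc.prems(1,3)] show ?case .
qed

section \<open>Counting sign vectors of affine forms\<close>

definition aff_eval :: "nat set \<Rightarrow> (nat \<Rightarrow> real) \<times> real \<Rightarrow> (nat \<Rightarrow> real) \<Rightarrow> real" where
  "aff_eval I h p = (\<Sum>i\<in>I. fst h i * p i) + snd h"

definition sign_vector ::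
    "'j set \<Rightarrow> nat set \<Rightarrow> ('j \<Rightarrow> (nat \<Rightarrow> real) \<times> real) \<Rightarrow> (nat \<Rightarrow> real) \<Rightarrow> 'j \<Rightarrow> real" where
  "sign_vector J I F p = restrict (\<lambda>j. sgn (aff_eval I (F j) p)) J"

lemma finite_sign_vectors: "finite J \<Longrightarrow> finite (sign_vector J I F ` P)"
proof (rule finite_subset)
  show "sign_vector J I F ` P \<subseteq> J \<rightarrow>\<^sub>E {-1, 0, 1}"
  proof (rule image_subsetI)
    show "sign_vector J I F p \<in> J \<rightarrow>\<^sub>E {-1, 0, 1}" for p
      unfolding sign_vector_def restrict_PiE_iff using sgn_real_range by auto
  qed
qed (simp add: finite_PiE)

lemma sign_vector_insert:
  "j \<notin> J \<Longrightarrow> sign_vector (insert j J) I F p = (sign_vector J I F p)(j := sgn (aff_eval I (F j) p))"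
  by (auto simp: sign_vector_def restrict_def)

lemma aff_eval_convex_comb:
  "aff_eval I h (\<lambda>i. (1 - l) * p i + l * q i) = (1 - l) * aff_eval I h p + l * aff_eval I h q"
proof -
  have "(\<Sum>i\<in>I. fst h i * ((1 - l) * p i + l * q i))
      = (1 - l) * (\<Sum>i\<in>I. fst h i * p i) + l * (\<Sum>i\<in>I. fst h i * q i)"
    by (simp add: sum_distrib_left sum.distrib[symmetric] algebra_simps)
  then show ?thesis unfolding aff_eval_def by (simp add: algebra_simps)
qed

lemma sign_vector_zero_between:
  assumes p: "aff_eval I f p > 0" and q: "aff_eval I f q < 0"
    and same: "sign_vector J I F p = sign_vector J I F q"
  shows "\<exists>z. aff_eval I f z = 0 \<and> sign_vector J I F z = sign_vector J I F p"
proof -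
  define l where "l = aff_eval I f p / (aff_eval I f p - aff_eval I f q)"
  have "0 \<le> l" "l \<le> 1"
    using p q unfolding l_def by (auto simp: field_simps)
  define z where "z = (\<lambda>i. (1 - l) * p i + l * q i)"
  have "aff_eval I f z = aff_eval I f p - l * (aff_eval I f p - aff_eval I f q)"
    unfolding z_def aff_eval_convex_comb by (simp add: algebra_simps)
  then have "aff_eval I f z = 0"
    unfolding l_def using p q by simp
  moreover have "sign_vector J I F z = sign_vector J I F p"
  proof
    fix j
    show "sign_vector J I F z j = sign_vector J I F p j"
    proof (cases "j \<in> J")
      case True
      then have "sgn (aff_eval I (F j) p) = sgn (aff_eval I (F j) q)"
        using fun_cong[OF same, of j] by (simp add: sign_vector_def)
      then show ?thesis
        using True sgn_convex_comb[OF \<open>0 \<le> l\<close> \<open>l \<le> 1\<close>]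
        unfolding z_def sign_vector_def aff_eval_convex_comb by simp
    qed (simp add: sign_vector_def)
  qed
  ultimately show ?thesis by blast
qed

definition aff_eliminate :: "(nat \<Rightarrow> real) \<times> real \<Rightarrow> nat \<Rightarrow> (nat \<Rightarrow> real) \<times> real \<Rightarrow> (nat \<Rightarrow> real) \<times> real" where
  "aff_eliminate f t h = (\<lambda>i. fst h i - fst h t * fst f i / fst f t, snd h - fst h t * snd f / fst f t)"

lemma aff_eval_eliminate:
  assumes "finite I" "t \<in> I" and ft: "fst f t \<noteq> 0" and zero: "aff_eval I f p = 0"
  shows "aff_eval I h p = aff_eval (I - {t}) (aff_eliminate f t h) p"
proof -
  define Sf where "Sf = (\<Sum>i\<in>I-{t}. fst f i * p i)"
  define Sh where "Sh = (\<Sum>i\<in>I-{t}. fst h i * p i)"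
  have split: "aff_eval I k p = (\<Sum>i\<in>I-{t}. fst k i * p i) + fst k t * p t + snd k" for k
    unfolding aff_eval_def using assms(1,2) by (simp add: sum.remove[of I t])
  have pt: "p t = - (Sf + snd f) / fst f t"
    using zero ft split[of f] unfolding Sf_def by (simp add: field_simps)
  have "aff_eval I h p = Sh - fst h t / fst f t * Sf + snd h - fst h t * snd f / fst f t"
    unfolding split[of h] Sh_def[symmetric] pt using ft by (simp add: field_simps)
  also have "\<dots> = aff_eval (I - {t}) (aff_eliminate f t h) p"
    unfolding aff_eval_def aff_eliminate_def Sf_def Sh_def
    by (simp add: algebra_simps sum_subtractf sum_distrib_left)
  finally show ?thesis .
qed

lemma card_sign_vectors_zero_set_le:
  assumes "finite I" "t \<in> I" "fst f t \<noteq> 0" "finite J"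
  shows "card (sign_vector J I F ` {p. aff_eval I f p = 0})
         \<le> card (range (sign_vector J (I - {t}) (\<lambda>j. aff_eliminate f t (F j))))"
proof (rule card_mono[OF finite_sign_vectors[OF \<open>finite J\<close>]], rule image_subsetI)
  fix p assume "p \<in> {p. aff_eval I f p = 0}"
  then have "sign_vector J I F p = sign_vector J (I - {t}) (\<lambda>j. aff_eliminate f t (F j)) p"
    unfolding sign_vector_def using aff_eval_eliminate[OF assms(1-3)] by simp
  then show "sign_vector J I F p \<in> range (sign_vector J (I - {t}) (\<lambda>j. aff_eliminate f t (F j)))"
    by simp
qed

text \<open>
  A sign vector of the old forms realised on both sides of the new form is also realised on its
  zero set, by convexity; there one variable can be eliminated.
\<close>

lemma card_sign_vectors_insert_le:
  assumes "finite J" "j \<notin> J"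
  shows "card (range (sign_vector (insert j J) I F))
         \<le> card (range (sign_vector J I F)) + 2 * card (sign_vector J I F ` {p. aff_eval I (F j) p = 0})"
proof -
  define A where "A s = sign_vector J I F ` {p. sgn (aff_eval I (F j) p) = s}" for s
  have finite_A: "finite (A s)" for s
    unfolding A_def using finite_sign_vectors[OF \<open>finite J\<close>] .
  let ?upd = "\<lambda>s. (\<lambda>\<sigma>. \<sigma>(j := s)) ` A s"
  have "range (sign_vector (insert j J) I F) \<subseteq> ?upd 1 \<union> ?upd 0 \<union> ?upd (-1)"
    unfolding A_def sign_vector_insert[OF \<open>j \<notin> J\<close>] using sgn_real_range by fastforce
  then have "card (range (sign_vector (insert j J) I F)) \<le> card (?upd 1 \<union> ?upd 0 \<union> ?upd (-1))"
    using finite_A by (intro card_mono) auto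
  also have "\<dots> \<le> card (?upd 1) + card (?upd 0) + card (?upd (-1))"
    by (meson card_Un_le add_right_mono order_trans)
  also have "\<dots> \<le> card (A 1) + card (A 0) + card (A (-1))"
    by (intro add_mono card_image_le finite_A)
  finally have "card (range (sign_vector (insert j J) I F)) \<le> card (A 1) + card (A 0) + card (A (-1))" .
  moreover have "A 1 \<inter> A (-1) \<subseteq> A 0"
  proof
    fix \<sigma> assume "\<sigma> \<in> A 1 \<inter> A (-1)"
    then obtain p q where "aff_eval I (F j) p > 0" "aff_eval I (F j) q < 0"
      and "\<sigma> = sign_vector J I F p" "\<sigma> = sign_vector J I F q"
      unfolding A_def by (auto simp: sgn_1_pos sgn_1_neg)
    then obtain z where "aff_eval I (F j) z = 0" "\<sigma> = sign_vector J I F z"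
      using sign_vector_zero_between[of I "F j" p q J F] by metis
    then show "\<sigma> \<in> A 0"
      unfolding A_def by (intro image_eqI[of _ _ z]) auto
  qed
  then have "card (A 1) + card (A (-1)) \<le> card (range (sign_vector J I F)) + card (A 0)"
    using card_Un_Int[OF finite_A finite_A, of 1 "-1"]
    by (metis (no_types, lifting) A_def add_mono card_mono finite_A finite_sign_vectors[OF \<open>finite J\<close>]
        image_mono subset_UNIV sup.bounded_iff)
  moreover have "A 0 = sign_vector J I F ` {p. aff_eval I (F j) p = 0}"
    unfolding A_def by (simp add: sgn_0_0)
  ultimately show ?thesis by simp
qed

lemma card_sign_vectors_insert_constant:
  assumes "j \<notin> J" "\<forall>i\<in>I. fst (F j) i = 0" "finite J"
  shows "card (range (sign_vector (insert j J) I F)) \<le> card (range (sign_vector J I F))"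
proof -
  have "aff_eval I (F j) p = snd (F j)" for p
    unfolding aff_eval_def using assms(2) by simp
  then have "range (sign_vector (insert j J) I F) = (\<lambda>\<sigma>. \<sigma>(j := sgn (snd (F j)))) ` range (sign_vector J I F)"
    unfolding sign_vector_insert[OF assms(1)] by auto
  then show ?thesis
    using card_image_le[OF finite_sign_vectors[OF \<open>finite J\<close>]] by simp
qed

lemma card_sign_vectors_le:
  assumes "finite J" "finite I"
  shows "card (range (sign_vector J I F)) \<le> (2 * card J + 1) ^ card I"
  using assms
proof (induction J arbitrary: I F rule: finite_induct)
  case empty
  have "sign_vector {} I F p = (\<lambda>_. undefined)" for p
    by (auto simp: sign_vector_def)
  then have "range (sign_vector {} I F) = {\<lambda>_. undefined}"
    by auto
  then show ?case by simp
next
  case (insert j J)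
  let ?m = "2 * card J + 1"
  have IH: "card (range (sign_vector J I F)) \<le> ?m ^ card I"
    using insert.IH[OF \<open>finite I\<close>] .
  show ?case
  proof (cases "\<forall>i\<in>I. fst (F j) i = 0")
    case True
    have "card (range (sign_vector (insert j J) I F)) \<le> ?m ^ card I"
      using card_sign_vectors_insert_constant[of j J I F] \<open>j \<notin> J\<close> True \<open>finite J\<close> IH by linarith
    also have "\<dots> \<le> (2 * card (insert j J) + 1) ^ card I"
      using insert by (intro power_mono) auto
    finally show ?thesis .
  next
    case False
    then obtain t where t: "t \<in> I" "fst (F j) t \<noteq> 0" by blast
    then obtain e where e: "card I = Suc e"
      using \<open>finite I\<close> by (cases "card I") auto
    have "card (sign_vector J I F ` {p. aff_eval I (F j) p = 0}) \<le> ?m ^ card (I - {t})"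
      using card_sign_vectors_zero_set_le[OF \<open>finite I\<close> t \<open>finite J\<close>, of F]
        insert.IH[of "I - {t}" "\<lambda>i. aff_eliminate (F j) t (F i)"] \<open>finite I\<close> by simp
    then have "card (sign_vector J I F ` {p. aff_eval I (F j) p = 0}) \<le> ?m ^ e"
      using t e \<open>finite I\<close> by simp
    then have "card (range (sign_vector (insert j J) I F)) \<le> ?m ^ Suc e + 2 * ?m ^ e"
      using card_sign_vectors_insert_le[OF \<open>finite J\<close> \<open>j \<notin> J\<close>, of I F] IH[unfolded e]
      by linarith
    also have "\<dots> \<le> (?m + 2) ^ Suc e"
      by (rule power_Suc_add_double_le)
    finally show ?thesis
      using insert e by simp
  qed
qed

definition aff_of_linform :: "nat \<Rightarrow> linform \<Rightarrow> (nat \<Rightarrow> real) \<times> real" where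
  "aff_of_linform n l = (case l of (a, b, c) \<Rightarrow> (\<lambda>i. if i < n then a i else b (i - n), c))"

definition join_inputs :: "nat \<Rightarrow> (nat \<Rightarrow> real) \<Rightarrow> (nat \<Rightarrow> real) \<Rightarrow> nat \<Rightarrow> real" where
  "join_inputs n x y = (\<lambda>i. if i < n then x i else y (i - n))"

lemma lin_eq_aff_eval: "lin n l x y = aff_eval {..<2 * n} (aff_of_linform n l) (join_inputs n x y)"
proof (cases l)
  case (fields a b c)
  define h where "h i = (if i < n then a i else b (i - n)) * join_inputs n x y i" for i
  have "(\<Sum>i<2 * n. h i) = (\<Sum>i\<in>{0..<n}. h i) + (\<Sum>i\<in>{n..<2 * n}. h i)"
    by (simp add: atLeast0LessThan[symmetric] sum.atLeastLessThan_concat)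
  also have "(\<Sum>i\<in>{n..<2 * n}. h i) = (\<Sum>i\<in>{0..<n}. h (i + n))"
    using sum.shift_bounds_nat_ivl[of h 0 n n] by (simp add: mult_2)
  finally have "(\<Sum>i<2 * n. h i) = (\<Sum>i<n. a i * x i) + (\<Sum>i<n. b i * y i)"
    by (simp add: h_def join_inputs_def atLeast0LessThan)
  then show ?thesis
    using fields by (simp add: lin_def aff_eval_def aff_of_linform_def h_def)
qed

lemma card_order_types_le: "card (range (order_type g n N)) \<le> (2 * (N * N) + 1) ^ (2 * n)"
proof -
  define G where "G = (\<lambda>(u, v). aff_of_linform n (lf_diff (g u) (g v)))"
  have "order_type g n N p = sign_vector ({..<N} \<times> {..<N}) {..<2 * n} G (join_inputs n (fst p) (snd p))"
    for p
    unfolding order_type_def sign_vector_def G_def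
    by (rule ext) (auto simp: restrict_def form_val_def lin_eq_aff_eval[symmetric])
  then have "range (order_type g n N) \<subseteq> range (sign_vector ({..<N} \<times> {..<N}) {..<2 * n} G)"
    by auto
  then have "card (range (order_type g n N)) \<le> card (range (sign_vector ({..<N} \<times> {..<N}) {..<2 * n} G))"
    by (intro card_mono finite_sign_vectors) auto
  also have "\<dots> \<le> (2 * card ({..<N} \<times> {..<N}) + 1) ^ card {..<2 * n}"
    by (rule card_sign_vectors_le) auto
  finally show ?thesis
    by (simp add: card_cartesian_product)
qed

section \<open>Sorted near differences determine the convolution\<close>

definition x_coord :: "nat \<Rightarrow> linform" where
  "x_coord i = (\<lambda>m. of_bool (m = i), \<lambda>_. 0, 0)"

definition y_coord :: "nat \<Rightarrow> linform" where
  "y_coord j = (\<lambda>_. 0, \<lambda>m. of_bool (m = j), 0)"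

lemma lin_x_coord [simp]: "i < n \<Longrightarrow> lin n (x_coord i) x y = x i"
  by (simp add: lin_def x_coord_def)

lemma lin_y_coord [simp]: "j < n \<Longrightarrow> lin n (y_coord j) x y = y j"
  by (simp add: lin_def y_coord_def)

definition near_pairs :: "nat \<Rightarrow> nat \<Rightarrow> (nat \<times> nat) list" where
  "near_pairs n d = concat (map (\<lambda>i. map (\<lambda>i'. (i, i')) [i + 1 - d..<min n (i + d)]) [0..<n])"

lemma mem_near_pairs:
  "(i, i') \<in> set (near_pairs n d) \<longleftrightarrow> i < n \<and> i + 1 - d \<le> i' \<and> i' < min n (i + d)"
  unfolding near_pairs_def by (auto intro: bexI[of _ i])

lemma length_near_pairs_le: "length (near_pairs n d) \<le> n * (2 * d)"
proof -
  have concat_bound: "length (concat (map f xs)) \<le> length xs * c"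
    if "\<forall>x\<in>set xs. length (f x) \<le> c" for f :: "nat \<Rightarrow> (nat \<times> nat) list" and xs c
    using that by (induction xs) auto
  have "length (near_pairs n d) \<le> length [0..<n] * (2 * d)"
    unfolding near_pairs_def by (intro concat_bound) auto
  then show ?thesis by simp
qed

definition near_differences :: "nat \<Rightarrow> nat \<Rightarrow> linform list" where
  "near_differences n d =
     map (\<lambda>(i, i'). lf_diff (x_coord i) (x_coord i')) (near_pairs n d)
     @ map (\<lambda>(j, j'). lf_diff (y_coord j) (y_coord j')) (near_pairs n d)"

lemma length_near_differences_le: "length (near_differences n d) \<le> 4 * n * d"
  using length_near_pairs_le[of n d] by (simp add: near_differences_def)

text \<open>
  Comparing \<open>x w - y (k - w)\<close> with \<open>x i - y (k - i)\<close> is comparing the near differences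
  \<open>x w - x i\<close> and \<open>y (k - w) - y (k - i)\<close>.
\<close>

lemma block_comparison_fixed:
  assumes "0 < d"
    and fixed: "order_fixed (\<lambda>u. near_differences n d ! u) n R (length (near_differences n d))"
    and "p0 \<in> R" "(x, y) \<in> R" "k < n" "w \<le> k" "i \<le> k" "w div d = i div d"
    and le: "fst p0 w - snd p0 (k - w) \<le> fst p0 i - snd p0 (k - i)"
  shows "x w - y (k - w) \<le> x i - y (k - i)"
proof -
  let ?g = "\<lambda>u. near_differences n d ! u"
  let ?P = "length (near_pairs n d)"
  have "w < i + d" "i < w + d"
    using same_block_less[OF \<open>0 < d\<close> \<open>w div d = i div d\<close>]
      same_block_less[OF \<open>0 < d\<close> \<open>w div d = i div d\<close>[symmetric]] by simp_all
  then have "(w, i) \<in> set (near_pairs n d)" "(k - w, k - i) \<in> set (near_pairs n d)"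
    unfolding mem_near_pairs using assms(5-7) by auto
  then obtain u v where u: "u < ?P" "near_pairs n d ! u = (w, i)"
    and v: "v < ?P" "near_pairs n d ! v = (k - w, k - i)"
    by (metis in_set_conv_nth)
  have "?g u = lf_diff (x_coord w) (x_coord i)"
    using u by (simp add: near_differences_def nth_append)
  then have val_u: "form_val ?g n u q = fst q w - fst q i" for q
    using assms(5-7) by (simp add: form_val_def)
  have "?g (?P + v) = lf_diff (y_coord (k - w)) (y_coord (k - i))"
    using v by (simp add: near_differences_def nth_append)
  then have val_v: "form_val ?g n (?P + v) q = snd q (k - w) - snd q (k - i)" for q
    using assms(5) by (simp add: form_val_def)
  have "u < length (near_differences n d)" "?P + v < length (near_differences n d)"
    using u v by (auto simp: near_differences_def)
  moreover have "form_val ?g n u p0 \<le> form_val ?g n (?P + v) p0"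
    unfolding val_u val_v using le by simp
  ultimately have "form_val ?g n u (x, y) \<le> form_val ?g n (?P + v) (x, y)"
    using order_fixed_le[OF fixed \<open>p0 \<in> R\<close> \<open>(x, y) \<in> R\<close>] by blast
  then show ?thesis
    unfolding val_u val_v by simp
qed

definition block_min :: "nat \<Rightarrow> input \<Rightarrow> nat \<Rightarrow> nat \<Rightarrow> nat" where
  "block_min d p k a = arg_min_on (\<lambda>i. fst p i - snd p (k - i)) {i. i \<le> k \<and> i div d = a}"

lemma block_min:
  assumes "0 < d" "a \<le> k div d"
  shows "block_min d p k a \<le> k" "block_min d p k a div d = a"
    and "i \<le> k \<Longrightarrow> i div d = a \<Longrightarrow>
      fst p (block_min d p k a) - snd p (k - block_min d p k a) \<le> fst p i - snd p (k - i)"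
proof -
  let ?block = "{i. i \<le> k \<and> i div d = a}"
  have "finite ?block" by simp
  moreover have "a * d \<in> ?block"
    using assms by (simp add: less_eq_div_iff_mult_less_eq)
  ultimately have "?block \<noteq> {}" "finite ?block" by auto
  note arg_min = arg_min_if_finite(1)[OF this(2,1)] arg_min_least[OF this(2,1)]
  show "block_min d p k a \<le> k" "block_min d p k a div d = a"
    using arg_min(1) unfolding block_min_def by auto
  show "fst p (block_min d p k a) - snd p (k - block_min d p k a) \<le> fst p i - snd p (k - i)"
    if "i \<le> k" "i div d = a"
    using arg_min(2)[of i] that unfolding block_min_def by simp
qed

definition block_candidates :: "nat \<Rightarrow> input \<Rightarrow> nat \<Rightarrow> linform list" where
  "block_candidates d p k =
     map (\<lambda>a. lf_diff (x_coord (block_min d p k a)) (y_coord (k - block_min d p k a))) [0..<Suc (k div d)]"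

lemma lin_block_candidates:
  assumes "0 < d" "k < n"
  shows "(\<lambda>h. lin n h x y) ` set (block_candidates d p k)
       = (\<lambda>a. x (block_min d p k a) - y (k - block_min d p k a)) ` {..k div d}"
proof -
  have set_eq: "set (block_candidates d p k)
      = (\<lambda>a. lf_diff (x_coord (block_min d p k a)) (y_coord (k - block_min d p k a))) ` {..k div d}"
    unfolding block_candidates_def set_map set_upt atLeastLessThanSuc_atLeastAtMost atLeast0AtMost ..
  have "block_min d p k a < n" "k - block_min d p k a < n" if "a \<le> k div d" for a
    using block_min(1)[OF \<open>0 < d\<close> that, of p] \<open>k < n\<close> by auto
  then show ?thesis
    unfolding set_eq image_image by (intro image_cong) auto
qed

lemma min_candidates_block_candidates:
  assumes "0 < d"
    and fixed: "order_fixed (\<lambda>u. near_differences n d ! u) n R (length (near_differences n d))"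
    and "p0 \<in> R"
  shows "min_candidates n min_minus_conv R (block_candidates d p0)"
proof -
  have "Min {x i - y (k - i) | i. i \<le> k} = Min ((\<lambda>h. lin n h x y) ` set (block_candidates d p0 k))"
    if "(x, y) \<in> R" "k < n" for x y k
    unfolding lin_block_candidates[OF \<open>0 < d\<close> \<open>k < n\<close>]
  proof (rule Min_eq_Min_dominating)
    let ?bm = "block_min d p0 k"
    show "finite {x i - y (k - i) | i. i \<le> k}" by simp
    show "(\<lambda>a. x (?bm a) - y (k - ?bm a)) ` {..k div d} \<noteq> {}" by simp
    show "(\<lambda>a. x (?bm a) - y (k - ?bm a)) ` {..k div d} \<subseteq> {x i - y (k - i) | i. i \<le> k}"
      using block_min(1)[OF \<open>0 < d\<close>, of _ k p0] by blast
    show "\<forall>s\<in>{x i - y (k - i) | i. i \<le> k}. \<exists>v\<in>(\<lambda>a. x (?bm a) - y (k - ?bm a)) ` {..k div d}. v \<le> s"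
    proof
      fix s assume "s \<in> {x i - y (k - i) | i. i \<le> k}"
      then obtain i where i: "i \<le> k" "s = x i - y (k - i)" by blast
      then have a: "i div d \<le> k div d" by (simp add: div_le_mono)
      have bm: "?bm (i div d) \<le> k" "?bm (i div d) div d = i div d"
        "fst p0 (?bm (i div d)) - snd p0 (k - ?bm (i div d)) \<le> fst p0 i - snd p0 (k - i)"
        using block_min[OF \<open>0 < d\<close> a, where p = p0] i(1) by auto
      have "x (?bm (i div d)) - y (k - ?bm (i div d)) \<le> s"
        unfolding i(2)
        by (rule block_comparison_fixed[OF \<open>0 < d\<close> fixed \<open>p0 \<in> R\<close> that bm(1) i(1) bm(2,3)])
      then show "\<exists>v\<in>(\<lambda>a. x (?bm a) - y (k - ?bm a)) ` {..k div d}. v \<le> s"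
        using a by blast
    qed
  qed
  then show ?thesis
    unfolding min_candidates_def min_minus_conv_def by (auto simp: block_candidates_def)
qed

lemma computable_on_min_minus_conv_sorted:
  assumes "0 < d"
    and "order_fixed (\<lambda>u. near_differences n d ! u) n R (length (near_differences n d))"
  shows "computable_on n min_minus_conv R (\<Sum>k<n. k div d)"
proof (cases "R = {}")
  case True
  then show ?thesis by (simp add: computable_on_empty sum_nonneg)
next
  case False
  then obtain p0 where "p0 \<in> R" by blast
  then have "computable_on n min_minus_conv R (\<Sum>k<n. length (block_candidates d p0 k) - 1)"
    using computable_on_min_candidates min_candidates_block_candidates assms by blast
  then show ?thesis
    by (simp add: block_candidates_def)
qed

lemma log2_sign_count_le:
  fixes n d N c :: nat
  assumes "1 \<le> n" "1 \<le> d" "n \<le> d * d" "N \<le> 4 * n * d"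
    and "0 < c" "c \<le> (2 * (N * N) + 1) ^ (2 * n)"
  shows "log 2 (real c) \<le> 24 * real n * real d"
proof -
  define M where "M = 2 * (N * N) + 1"
  have "N * N \<le> 16 * ((n * n) * (d * d))"
    using mult_le_mono[OF assms(4) assms(4)] by (simp add: algebra_simps)
  moreover have "1 \<le> (n * n) * (d * d)"
    using assms(1,2) by simp
  ultimately have "M \<le> 33 * (n * n) * (d * d)"
    unfolding M_def by linarith
  also have "\<dots> \<le> 33 * (d * d * (d * d)) * (d * d)"
    using assms(3) by (intro mult_le_mono order_refl)
  also have "\<dots> \<le> (2 * d) ^ 6"
    by (simp add: power_mult_distrib eval_nat_numeral algebra_simps)
  finally have "M \<le> (2 * d) ^ 6" .
  have "0 < M"
    unfolding M_def by simp
  have "real c \<le> real (M ^ (2 * n))"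
    using assms(6) unfolding M_def of_nat_le_iff .
  then have "log 2 (real c) \<le> log 2 (real (M ^ (2 * n)))"
    using assms(5) \<open>0 < M\<close> by (subst log_le_cancel_iff) auto
  also have "\<dots> = real (2 * n) * log 2 (real M)"
    using \<open>0 < M\<close> by (simp add: log_nat_power)
  also have "\<dots> \<le> real (2 * n) * (12 * real d)"
  proof (rule mult_left_mono)
    have "real M \<le> real ((2 * d) ^ 6)"
      using \<open>M \<le> (2 * d) ^ 6\<close> by (simp only: of_nat_le_iff)
    then have "log 2 (real M) \<le> log 2 (real ((2 * d) ^ 6))"
      using \<open>0 < M\<close> assms(2) by (subst log_le_cancel_iff) auto
    also have "\<dots> = 6 * log 2 (real (2 * d))"
      using log_nat_power[of "real (2 * d)" 2 6] by (simp only: of_nat_power)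
    also have "\<dots> \<le> 6 * real (2 * d)"
      using log2_le_self[of "2 * d"] assms(2) by simp
    finally show "log 2 (real M) \<le> 12 * real d" by simp
  qed simp
  finally show ?thesis
    by (simp add: algebra_simps)
qed

lemma ceiling_sqrt_bounds:
  fixes n :: nat
  assumes "1 \<le> n"
  defines "d \<equiv> nat \<lceil>sqrt (real n)\<rceil>"
  shows "1 \<le> d" "n \<le> d * d" "real d \<le> 2 * sqrt (real n)"
proof -
  have "1 \<le> sqrt (real n)"
    using assms(1) by simp
  then have d: "real d = real_of_int \<lceil>sqrt (real n)\<rceil>"
    unfolding d_def by simp
  have "sqrt (real n) \<le> real d" "real d \<le> sqrt (real n) + 1"
    unfolding d by (rule le_of_int_ceiling, rule of_int_ceiling_le_add_one)
  then show "1 \<le> d" "real d \<le> 2 * sqrt (real n)"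
    using \<open>1 \<le> sqrt (real n)\<close> by linarith+
  have "real n = sqrt (real n) * sqrt (real n)"
    by simp
  also have "\<dots> \<le> real d * real d"
    using \<open>sqrt (real n) \<le> real d\<close> by (intro mult_mono) auto
  finally show "n \<le> d * d"
    by (simp only: of_nat_mult[symmetric] of_nat_le_iff)
qed

lemma computable_on_min_minus_conv:
  assumes "1 \<le> n"
  shows "computable_on n min_minus_conv UNIV (114 * real n * sqrt (real n))"
proof -
  define d where "d = nat \<lceil>sqrt (real n)\<rceil>"
  have d: "1 \<le> d" "n \<le> d * d" "real d \<le> 2 * sqrt (real n)"
    using ceiling_sqrt_bounds[OF assms] unfolding d_def by auto
  define g where "g = (\<lambda>u. near_differences n d ! u)"
  define N where "N = length (near_differences n d)"
  define K where "K = real (\<Sum>k<n. k div d)"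
  define c where "c = card (range (order_type g n N))"
  have "order_fixed g n UNIV 0"
    by (simp add: order_fixed_def)
  then have "computable_on n min_minus_conv UNIV (K + 2 * log 2 c + 2 * real (N - 0))"
    unfolding K_def c_def using d(1)
    by (intro computable_on_by_sorting computable_on_min_minus_conv_sorted)
      (auto simp: g_def N_def sum_nonneg)
  moreover have "K \<le> real n * real d"
  proof -
    have "k div d \<le> d" if "k < n" for k
      using that d(1,2) div_less_iff_less_mult[of d k d] by simp
    then have "(\<Sum>k<n. k div d) \<le> n * d"
      using sum_bounded_above[of "{..<n}" "\<lambda>k. k div d" d] by simp
    then show ?thesis
      unfolding K_def by (simp only: of_nat_mult[symmetric] of_nat_le_iff)
  qed
  moreover have "N \<le> 4 * n * d"
    unfolding N_def by (rule length_near_differences_le)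
  then have "real N \<le> 4 * real n * real d"
    by (metis of_nat_le_iff of_nat_mult of_nat_numeral)
  moreover have "log 2 c \<le> 24 * real n * real d"
    using log2_sign_count_le[OF assms d(1,2) \<open>N \<le> 4 * n * d\<close>]
      card_order_types_pos[of UNIV g n N] card_order_types_le[of g n N]
    unfolding c_def by simp
  ultimately have "computable_on n min_minus_conv UNIV (57 * (real n * real d))"
    by (elim computable_on_weaken) (simp add: algebra_simps)
  moreover have "57 * (real n * real d) \<le> 114 * real n * sqrt (real n)"
    using mult_left_mono[OF d(3), of "57 * real n"] by simp
  ultimately show ?thesis
    by (rule computable_on_weaken)
qed

theorem theorem4:
  shows "\<exists>C::real. \<forall>n::nat. \<exists>T. computes_min_minus_conv n T \<and>
           real (depth T) \<le> C * real n * sqrt (real n)"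
proof (rule exI[of _ 114], rule allI)
  fix n :: nat
  show "\<exists>T. computes_min_minus_conv n T \<and> real (depth T) \<le> 114 * real n * sqrt (real n)"
  proof (cases "n = 0")
    case True
    then show ?thesis
      by (intro exI[of _ "Leaf (\<lambda>_. (\<lambda>_. 0, \<lambda>_. 0, 0))"]) (simp add: computes_min_minus_conv_def)
  next
    case False
    then have "computable_on n min_minus_conv UNIV (114 * real n * sqrt (real n))"
      by (intro computable_on_min_minus_conv) simp
    then show ?thesis
      unfolding computable_on_def computes_min_minus_conv_def by auto
  qed
qed

end
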